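(* Let $T$ be a p-string of length $n$. Suppose a node $v$ of $\mathrm{PPH}(T)$ has a reversed suffix link $\mathrm{rslink}(a,v)$ with $a\in\Sigma\cup\{0,\ldots,n-1\}$, and let $u$ be any ancestor of $v$. Then: - if $a\in\Sigma\cup\{0\}$, then $\mathrm{rslink}(a,u)$ is defined; - if $a\in\{1,\ldots,n-1\}$ and $|u|\ge a$, then $\mathrm{rslink}(a,u)$ is defined; - if $a\in\{1,\ldots,n-1\}$ and $|u|<a$, then $\mathrm{rslink}(0,u)$ is defined.
   Context: Let $\Sigma$ and $\Pi$ be disjoint alphabets. A p-string is a finite string over $\Sigma\cup\Pi$. For a string $S$, $S[i]$ is its $i$-th character, $S[i..j]$ is the substring from position $i$ to $j$ (empty if $j<i$), and $S[i..]=S[i..|S|]$. The previous encoding $\mathrm{prev}(S)$ of a p-string $S$ of length $n$ is the sequence of length $n$ defined by: - $\mathrm{prev}(S)[i]=S[i]$ if $S[i]\in\Sigma$; - $\mathrm{prev}(S)[i]=0$ if $S[i]\in\Pi$ does not occur in $S[1..i-1]$; - $\mathrm{prev}(S)[i]=i-j$ otherwise, where $j<i$ is the largest position with $S[j]=S[i]$. Sequence hash tree. Let $\langle S_1,\ldots,S_k\rangle$ be a sequence of strings with $S_1=\varepsilon$ and with $S_i$ not a prefix of $S_j$ for any $j<i$. Its sequence hash tree is built as follows. Start from a root representing $\varepsilon$. For $i=2,\ldots,k$, insert as a new node the shortest prefix $p_i$ of $S_i$ that is not yet a node. Attach it as a child of the longest prefix $q_i$ of $S_i$ that is already a node, via an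 edge labeled $S_i[|q_i|+1]$. The parameterized position heap $\mathrm{PPH}(T)$ is the sequence hash tree of $\langle\varepsilon,\mathrm{prev}(T[n..]),\ldots,\mathrm{prev}(T[1..])\rangle$. Each node is identified with the string of edge labels on the path from the root to it, and $|v|$ denotes its length. A string is represented by $\mathrm{PPH}(T)$ if it is spelled by a path from the root. Reversed suffix links. For a node $v$ and $a\in\Sigma\cup\{0,\ldots,n-1\}$, $\mathrm{rslink}(a,v)$ is defined as follows: - if $a\in\Sigma\cup\{0\}$ and $av$ is represented by $\mathrm{PPH}(T)$, then $\mathrm{rslink}(a,v)=av$; - if $a\in\{1,\ldots,n-1\}$, $v[a]=0$, and $0\,v[1..a-1]\,a\,v[a+1..|v|]$ is represented by $\mathrm{PPH}(T)$, then $\mathrm{rslink}(a,v)$ is that node; - otherwise $\mathrm{rslink}(a,v)$ is undefined. *)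

theory Defs
  imports Main "HOL-Library.Sublist"
begin

text \<open>P-strings: characters are Inl c (c in Sigma, static) or Inr p (p in Pi,
  parameter); the sum type makes Sigma and Pi disjoint. Strings are lists,
  indexed from 0 internally (paper position i is list index i-1).\<close>

type_synonym ('s, 'p) pstring = "('s + 'p) list"

datatype 's pc = Ch 's | Num nat

definition prev :: "('s, 'p) pstring \<Rightarrow> 's pc list" where
  "prev S = map (\<lambda>i. case S ! i of
        Inl c \<Rightarrow> Ch c
      | Inr p \<Rightarrow> (if Inr p \<in> set (take i S)
                 then Num (i - (GREATEST j. j < i \<and> S ! j = Inr p))
                 else Num 0)) [0..<length S]"

text \<open>Nodes are identified with the strings they spell;
  the constructed node set is prefix-closed and the parent of a node is its
  longest proper prefix, so the tree is determined by its node set.\<close>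

definition sht_insert :: "'a list set \<Rightarrow> 'a list \<Rightarrow> 'a list set" where
  "sht_insert N s = insert (take (LEAST k. take k s \<notin> N) s) N"

definition sht_nodes :: "'a list list \<Rightarrow> 'a list set" where
  "sht_nodes Ss = foldl sht_insert {[]} (tl Ss)"

definition pph :: "('s, 'p) pstring \<Rightarrow> 's pc list set" where
  "pph T = sht_nodes ([] # map (\<lambda>i. prev (drop i T)) (rev [0..<length T]))"

definition rslink :: "('s, 'p) pstring \<Rightarrow> 's pc \<Rightarrow> 's pc list \<Rightarrow> 's pc list option" where
  "rslink T a v = (case a of
      Ch c \<Rightarrow> (if Ch c # v \<in> pph T then Some (Ch c # v) else None)
    | Num k \<Rightarrow>
        (if k = 0 then (if Num 0 # v \<in> pph T then Some (Num 0 # v) else None)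
         else if k < length T \<and> k \<le> length v \<and> v ! (k - 1) = Num 0
                 \<and> Num 0 # take (k - 1) v @ Num k # drop k v \<in> pph T
              then Some (Num 0 # take (k - 1) v @ Num k # drop k v)
              else None))"

end

theory Submission
  imports Defs
begin

text \<open>Every sequence hash tree is prefix-closed, since a node is only inserted
  once all its proper prefixes are nodes. Hence it suffices to show that the
  string a link of u would point to is a prefix of the string rslink(a, v) points
  to: for a static symbol or 0 this is a u versus a v; for 1 \<le> a \<le> |u| the
  substitution of the a-th symbol commutes with taking prefixes; and for a > |u|,
  0 u is a prefix of 0 v[1..a-1], which starts the node rslink(a, v).\<close>

definition prefix_closed :: "'a list set \<Rightarrow> bool" where
  "prefix_closed N \<longleftrightarrow> (\<forall>x\<in>N. \<forall>y. prefix y x \<longrightarrow> y \<in> N)"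

lemma prefix_closed_sht_insert:
  assumes "prefix_closed N"
  shows "prefix_closed (sht_insert N s)"
proof (cases "\<exists>k. take k s \<notin> N")
  case False
  then have "sht_insert N s = N" by (auto simp: sht_insert_def)
  with assms show ?thesis by simp
next
  case True
  define m where "m = (LEAST k. take k s \<notin> N)"
  have below_m: "take j s \<in> N" if "j < m" for j
    using that not_less_Least m_def by blast
  have "y \<in> N \<or> y = take m s" if "prefix y (take m s)" for y
  proof -
    have "y = take (length y) (take m s)"
      using that by (metis append_eq_conv_conj prefix_def)
    moreover have "length y \<le> length (take m s)"
      using that by (rule prefix_length_le)
    ultimately have y: "y = take (length y) s" "length y \<le> m"
      by (simp_all add: min_def split: if_splits)
    show ?thesis
    proof (cases "length y < m")
      case True
      with y below_m show ?thesis by metis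
    next
      case False
      with y show ?thesis by simp
    qed
  qed
  with assms show ?thesis
    unfolding prefix_closed_def sht_insert_def m_def[symmetric] by blast
qed

lemma prefix_closed_foldl_sht_insert:
  "prefix_closed N \<Longrightarrow> prefix_closed (foldl sht_insert N Ss)"
  by (induction Ss arbitrary: N) (simp_all add: prefix_closed_sht_insert)

lemma prefix_closed_sht_nodes: "prefix_closed (sht_nodes Ss)"
proof -
  have "prefix_closed {[]}" by (simp add: prefix_closed_def)
  then show ?thesis
    unfolding sht_nodes_def by (rule prefix_closed_foldl_sht_insert)
qed

lemma pph_prefix: "x \<in> pph T \<Longrightarrow> prefix y x \<Longrightarrow> y \<in> pph T"
  using prefix_closed_sht_nodes unfolding pph_def prefix_closed_def by blast

lemma prefix_list_update: "prefix u v \<Longrightarrow> prefix (u[i := c]) (v[i := c])"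
  by (auto simp: prefix_def list_update_append list_update_beyond)

lemma rslink_static_iff:
  assumes "b \<in> range Ch \<union> {Num 0}"
  shows "rslink T b v \<noteq> None \<longleftrightarrow> b # v \<in> pph T"
  using assms by (auto simp: rslink_def split: if_splits)

lemma rslink_Num_iff:
  assumes "0 < k"
  shows "rslink T (Num k) v \<noteq> None \<longleftrightarrow>
    k < length T \<and> k \<le> length v \<and> v ! (k - 1) = Num 0
    \<and> Num 0 # v[k - 1 := Num k] \<in> pph T"
proof -
  have "k \<le> length v \<Longrightarrow> take (k - 1) v @ Num k # drop k v = v[k - 1 := Num k]"
    using assms by (simp add: upd_conv_take_nth_drop)
  with assms show ?thesis by (auto simp: rslink_def)
qed

lemma rslink_static_ancestor:
  assumes "b \<in> range Ch \<union> {Num 0}" "rslink T b v \<noteq> None" "prefix u v"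
  shows "rslink T b u \<noteq> None"
proof -
  have "b # v \<in> pph T"
    using assms(2) unfolding rslink_static_iff[OF assms(1)] .
  then have "b # u \<in> pph T"
    using assms(3) pph_prefix[of "b # v" T "b # u"] by simp
  then show ?thesis
    unfolding rslink_static_iff[OF assms(1)] .
qed

lemma rslink_Num_ancestor:
  assumes "rslink T (Num k) v \<noteq> None" "prefix u v" "0 < k" "k \<le> length u"
  shows "rslink T (Num k) u \<noteq> None"
proof -
  from assms(1)[unfolded rslink_Num_iff[OF assms(3)]]
  have link: "Num 0 # v[k - 1 := Num k] \<in> pph T"
    and "v ! (k - 1) = Num 0" "k < length T"
    by auto
  moreover have "u ! (k - 1) = v ! (k - 1)"
    using assms(2-4) by (auto simp: prefix_def nth_append)
  moreover have "prefix (Num 0 # u[k - 1 := Num k]) (Num 0 # v[k - 1 := Num k])"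
    using assms(2) by (simp add: prefix_list_update)
  with link have "Num 0 # u[k - 1 := Num k] \<in> pph T"
    by (rule pph_prefix)
  ultimately show ?thesis
    unfolding rslink_Num_iff[OF assms(3)] using assms(4) by simp
qed

lemma rslink_Num_short_ancestor:
  assumes "rslink T (Num k) v \<noteq> None" "prefix u v" "0 < k" "length u < k"
  shows "rslink T (Num 0) u \<noteq> None"
proof -
  from assms(1)[unfolded rslink_Num_iff[OF assms(3)]]
  have link: "Num 0 # v[k - 1 := Num k] \<in> pph T" "k \<le> length v"
    by auto
  have "prefix u (take (k - 1) v)"
    using assms(2,4) link(2) by (intro prefix_length_prefix[OF _ take_is_prefix]) auto
  also have "take (k - 1) v = take (k - 1) (v[k - 1 := Num k])"
    by simp
  also have "prefix \<dots> (v[k - 1 := Num k])"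
    by (rule take_is_prefix)
  finally have "prefix (Num 0 # u) (Num 0 # v[k - 1 := Num k])"
    by simp
  with link(1) have "Num 0 # u \<in> pph T"
    by (rule pph_prefix)
  then show ?thesis
    by (simp add: rslink_def)
qed

theorem proposition1:
  fixes T :: "('s, 'p) pstring" and a :: "'s pc" and u v :: "'s pc list"
  assumes "v \<in> pph T"
    and "a \<in> range Ch \<union> Num ` {0..<length T}"
    and "rslink T a v \<noteq> None"
    and "u \<in> pph T" and "prefix u v"
  shows "(a \<in> range Ch \<union> {Num 0} \<longrightarrow> rslink T a u \<noteq> None)
    \<and> (\<forall>k. a = Num k \<and> 1 \<le> k \<and> k < length T \<and> k \<le> length u \<longrightarrow> rslink T a u \<noteq> None)
    \<and> (\<forall>k. a = Num k \<and> 1 \<le> k \<and> k < length T \<and> length u < k \<longrightarrow> rslink T (Num 0) u \<noteq> None)"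
proof (intro conjI allI impI)
  show "rslink T a u \<noteq> None" if "a \<in> range Ch \<union> {Num 0}"
    using rslink_static_ancestor[OF that assms(3,5)] .
  show "rslink T a u \<noteq> None" if "a = Num k \<and> 1 \<le> k \<and> k < length T \<and> k \<le> length u" for k
    using that assms(3,5) rslink_Num_ancestor[of T k v u] by auto
  show "rslink T (Num 0) u \<noteq> None" if "a = Num k \<and> 1 \<le> k \<and> k < length T \<and> length u < k" for k
    using that assms(3,5) rslink_Num_short_ancestor[of T k v u] by auto
qed

end
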